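(* For every partition $\Sigma$ (of well-founded sets) and every bijection $q\mapsto q^{(\bullet)}$ from a set of places $\mathcal P_\Sigma$ onto $\Sigma$, the $\otimes$-graph $\mathcal G_\Sigma$ induced by $\Sigma$ via this bijection is accessible.
   Context: Sets range over the von Neumann universe of well-founded sets. For sets $s,t$, $s\otimes t=\{\{u,v\} : u\in s,\ v\in t\}$. A partition is a set of pairwise disjoint nonempty sets (blocks). For a set $S$, $\mathrm{Pow}^*_{1,2}(S)=\{t\subseteq\bigcup S : 1\le|t|\le2,\ t\cap s\neq\emptyset\text{ for all }s\in S\}$, and for a family $\mathcal B$, $\mathrm{Pow}^*_{1,2}[\mathcal B]=\{\mathrm{Pow}^*_{1,2}(B):B\in\mathcal B\}$. A subset $\Sigma^*\subseteq\Sigma$ is a $\otimes$-subpartition if $\bigcup\Sigma^*=\bigcup\mathrm{Pow}^*_{1,2}[\mathcal B]$ for some $\mathcal B\subseteq\Sigma\otimes\Sigma$; $\Sigma_\otimes$ is the largest $\otimes$-subpartition and $\Pi_\otimes\subseteq\Sigma\otimes\Sigma$ is the (unique) set with $\bigcup\Sigma_\otimes=\bigcup\mathrm{Pow}^*_{1,2}[\Pi_\otimes]$. A $\otimes$-graph $\mathcal G=(\mathcal P,\mathcal N,\mathcal T)$ consists of a set $\mathcal P$ of places, nodes $\mathcal N=\mathcal P\otimes\mathcal P$ (nonempty subsets of $\mathcal P$ with at most two elements), $\mathcal P\cap\mathcal N=\emptyset$, and a target map $\mathcal T:\mathcal N\to\mathcal P(\mathcal P)$. A source place is a place belonging to no $\mathcal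 T(A)$. The accessible places form the smallest set of places containing all source places and containing $\mathcal T(A)$ whenever all places of the node $A$ belong to it; $\mathcal G$ is accessible if every place is accessible. The $\otimes$-graph induced by $\Sigma$ via a bijection $q\mapsto q^{(\bullet)}$ from $\mathcal P_\Sigma$ (with $\mathcal P_\Sigma\cap(\mathcal P_\Sigma\otimes\mathcal P_\Sigma)=\emptyset$) onto $\Sigma$ has nodes $\mathcal P_\Sigma\otimes\mathcal P_\Sigma$ and, writing $B^{(\bullet)}=\{q^{(\bullet)}:q\in B\}$, target map $\mathcal T_\Sigma(B)=\{q\in\mathcal P_\Sigma : q^{(\bullet)}\in\Sigma_\otimes,\ q^{(\bullet)}\cap\mathrm{Pow}^*_{1,2}(B^{(\bullet)})\neq\emptyset\}$ if $B^{(\bullet)}\in\Pi_\otimes$, and $\mathcal T_\Sigma(B)=\emptyset$ otherwise. *)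

theory Defs
  imports Main
begin

text \<open>Well-founded sets are modelled by an arbitrary type 'a carrying a membership
relation mem that is well-founded, extensional and closed under pairing
(a model of the relevant fragment of the von Neumann universe).
ext x is the set of members of x.\<close>

definition wf_set_model :: "('a \<Rightarrow> 'a \<Rightarrow> bool) \<Rightarrow> bool" where
  "wf_set_model mem \<longleftrightarrow>
     wf {(x, y). mem x y}
   \<and> (\<forall>x y. (\<forall>z. mem z x \<longleftrightarrow> mem z y) \<longrightarrow> x = y)
   \<and> (\<forall>u v. \<exists>x. \<forall>z. mem z x \<longleftrightarrow> z = u \<or> z = v)"

definition ext :: "('a \<Rightarrow> 'a \<Rightarrow> bool) \<Rightarrow> 'a \<Rightarrow> 'a set" where
  "ext mem x = {z. mem z x}"

definition otimes :: "'b set \<Rightarrow> 'b set \<Rightarrow> 'b set set" where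
  "otimes s t = {{u, v} | u v. u \<in> s \<and> v \<in> t}"

definition is_partition :: "'b set set \<Rightarrow> bool" where
  "is_partition \<Sigma> \<longleftrightarrow> (\<forall>s\<in>\<Sigma>. s \<noteq> {}) \<and> (\<forall>s\<in>\<Sigma>. \<forall>t\<in>\<Sigma>. s \<noteq> t \<longrightarrow> s \<inter> t = {})"

definition Pow12 :: "('a \<Rightarrow> 'a \<Rightarrow> bool) \<Rightarrow> 'a set set \<Rightarrow> 'a set" where
  "Pow12 mem S = {x. ext mem x \<subseteq> \<Union>S \<and> 1 \<le> card (ext mem x) \<and> card (ext mem x) \<le> 2
                     \<and> (\<forall>s\<in>S. ext mem x \<inter> s \<noteq> {})}"

definition Pow12_fam :: "('a \<Rightarrow> 'a \<Rightarrow> bool) \<Rightarrow> 'a set set set \<Rightarrow> 'a set set" where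
  "Pow12_fam mem \<B> = {Pow12 mem B | B. B \<in> \<B>}"

definition is_otimes_subpartition ::
    "('a \<Rightarrow> 'a \<Rightarrow> bool) \<Rightarrow> 'a set set \<Rightarrow> 'a set set \<Rightarrow> bool" where
  "is_otimes_subpartition mem \<Sigma> S \<longleftrightarrow> S \<subseteq> \<Sigma> \<and>
     (\<exists>\<B>. \<B> \<subseteq> otimes \<Sigma> \<Sigma> \<and> \<Union>S = \<Union>(Pow12_fam mem \<B>))"

definition Sigma_otimes :: "('a \<Rightarrow> 'a \<Rightarrow> bool) \<Rightarrow> 'a set set \<Rightarrow> 'a set set" where
  "Sigma_otimes mem \<Sigma> = (GREATEST S. is_otimes_subpartition mem \<Sigma> S)"

definition Pi_otimes :: "('a \<Rightarrow> 'a \<Rightarrow> bool) \<Rightarrow> 'a set set \<Rightarrow> 'a set set set" where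
  "Pi_otimes mem \<Sigma> = (THE \<B>. \<B> \<subseteq> otimes \<Sigma> \<Sigma> \<and>
                         \<Union>(Sigma_otimes mem \<Sigma>) = \<Union>(Pow12_fam mem \<B>))"

text \<open>\<otimes>-graphs: places P (of type 'p), nodes P \<otimes> P (of type 'p set, hence
automatically disjoint from the places), target map T.\<close>
definition source_places :: "'p set \<Rightarrow> ('p set \<Rightarrow> 'p set) \<Rightarrow> 'p set" where
  "source_places P T = {p \<in> P. \<forall>A \<in> otimes P P. p \<notin> T A}"

definition accessible_places :: "'p set \<Rightarrow> ('p set \<Rightarrow> 'p set) \<Rightarrow> 'p set" where
  "accessible_places P T = \<Inter>{X. X \<subseteq> P \<and> source_places P T \<subseteq> X
       \<and> (\<forall>A \<in> otimes P P. A \<subseteq> X \<longrightarrow> T A \<subseteq> X)}"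

definition accessible_graph :: "'p set \<Rightarrow> ('p set \<Rightarrow> 'p set) \<Rightarrow> bool" where
  "accessible_graph P T \<longleftrightarrow> accessible_places P T = P"

definition induced_target ::
    "('a \<Rightarrow> 'a \<Rightarrow> bool) \<Rightarrow> 'a set set \<Rightarrow> 'p set \<Rightarrow> ('p \<Rightarrow> 'a set) \<Rightarrow> 'p set \<Rightarrow> 'p set" where
  "induced_target mem \<Sigma> P f B =
     (if f ` B \<in> Pi_otimes mem \<Sigma>
      then {q \<in> P. f q \<in> Sigma_otimes mem \<Sigma> \<and> f q \<inter> Pow12 mem (f ` B) \<noteq> {}}
      else {})"

end

theory Submission
  imports Defs
begin

text \<open>Pick a member x of the block of a place q and argue by \<in>-induction on x.
If the block of q is not in \<Sigma>_\<otimes>, then q is a source place. Otherwise x lies in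
Pow*_{1,2}({u, v}) for some {u, v} \<in> \<Pi>_\<otimes>; so x has members y \<in> u and z \<in> v, whose
places are accessible by induction, and q is a target of the node formed by these
two places.\<close>

lemma source_places_subset_accessible: "source_places P T \<subseteq> accessible_places P T"
  unfolding accessible_places_def by blast

lemma target_subset_accessible:
  assumes "A \<in> otimes P P" and "A \<subseteq> accessible_places P T"
  shows "T A \<subseteq> accessible_places P T"
  using assms unfolding accessible_places_def by blast

lemma accessible_graphI:
  assumes "\<And>A. A \<in> otimes P P \<Longrightarrow> T A \<subseteq> P"
    and "P \<subseteq> accessible_places P T"
  shows "accessible_graph P T"
proof -
  have "accessible_places P T \<subseteq> P"
    using assms(1) unfolding accessible_places_def source_places_def by blast
  with assms(2) show ?thesis
    unfolding accessible_graph_def by blast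
qed

lemma otimes_subset: "B \<in> otimes \<Sigma> \<Sigma> \<Longrightarrow> B \<subseteq> \<Sigma>"
  unfolding otimes_def by auto

lemma Pow12_eq_on_partition:
  assumes part: "is_partition \<Sigma>" and "B \<subseteq> \<Sigma>" "B' \<subseteq> \<Sigma>"
    and "x \<in> Pow12 mem B" "x \<in> Pow12 mem B'"
  shows "B = B'"
proof -
  have "C \<subseteq> C'"
    if sub: "C \<subseteq> \<Sigma>" "C' \<subseteq> \<Sigma>" and x: "x \<in> Pow12 mem C" "x \<in> Pow12 mem C'" for C C'
  proof
    fix s assume s: "s \<in> C"
    then obtain y where y: "y \<in> ext mem x" "y \<in> s"
      using x(1) unfolding Pow12_def by blast
    then obtain s' where s': "s' \<in> C'" "y \<in> s'"
      using x(2) unfolding Pow12_def by blast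
    have "s = s'"
      using part s s' y sub unfolding is_partition_def by blast
    with s' show "s \<in> C'" by simp
  qed
  with assms(2-5) show ?thesis by (intro subset_antisym)
qed

lemma Pow12_nonempty:
  assumes "wf_set_model mem" and "\<forall>s\<in>\<Sigma>. s \<noteq> {}" and "B \<in> otimes \<Sigma> \<Sigma>"
  shows "Pow12 mem B \<noteq> {}"
proof -
  obtain u v where uv: "B = {u, v}" "u \<in> \<Sigma>" "v \<in> \<Sigma>"
    using assms(3) unfolding otimes_def by auto
  obtain a b where ab: "a \<in> u" "b \<in> v"
    using assms(2) uv(2,3) by (meson ex_in_conv)
  obtain x where "\<forall>z. mem z x \<longleftrightarrow> z = a \<or> z = b"
    using assms(1) unfolding wf_set_model_def by blast
  then have x: "ext mem x = {a, b}"
    unfolding ext_def by auto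
  have "card {a, b} \<in> {1, 2}"
    by (simp add: card_insert_if)
  with x uv ab have "x \<in> Pow12 mem B"
    unfolding Pow12_def by auto
  then show ?thesis by blast
qed

lemma is_otimes_subpartition_Union:
  assumes "\<And>S. S \<in> \<SS> \<Longrightarrow> is_otimes_subpartition mem \<Sigma> S"
  shows "is_otimes_subpartition mem \<Sigma> (\<Union>\<SS>)"
proof -
  define Wit where "Wit = {\<B>. \<B> \<subseteq> otimes \<Sigma> \<Sigma> \<and> (\<exists>S\<in>\<SS>. \<Union>S = \<Union>(Pow12_fam mem \<B>))}"
  have "\<Union>(\<Union>\<SS>) = (\<Union>\<B>\<in>Wit. \<Union>(Pow12_fam mem \<B>))"
  proof (rule subset_antisym)
    show "\<Union>(\<Union>\<SS>) \<subseteq> (\<Union>\<B>\<in>Wit. \<Union>(Pow12_fam mem \<B>))"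
    proof
      fix x assume "x \<in> \<Union>(\<Union>\<SS>)"
      then obtain S where S: "S \<in> \<SS>" "x \<in> \<Union>S" by blast
      then obtain \<B> where "\<B> \<subseteq> otimes \<Sigma> \<Sigma>" "\<Union>S = \<Union>(Pow12_fam mem \<B>)"
        using assms[OF S(1)] unfolding is_otimes_subpartition_def by (elim conjE exE)
      with S have "\<B> \<in> Wit" "x \<in> \<Union>(Pow12_fam mem \<B>)"
        unfolding Wit_def by auto
      then show "x \<in> (\<Union>\<B>\<in>Wit. \<Union>(Pow12_fam mem \<B>))" by blast
    qed
    show "(\<Union>\<B>\<in>Wit. \<Union>(Pow12_fam mem \<B>)) \<subseteq> \<Union>(\<Union>\<SS>)"
    proof (rule UN_least)
      fix \<B> assume "\<B> \<in> Wit"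
      then obtain S where "S \<in> \<SS>" "\<Union>S = \<Union>(Pow12_fam mem \<B>)"
        unfolding Wit_def by blast
      then show "\<Union>(Pow12_fam mem \<B>) \<subseteq> \<Union>(\<Union>\<SS>)" by blast
    qed
  qed
  also have "\<dots> = \<Union>(Pow12_fam mem (\<Union>Wit))"
    unfolding Pow12_fam_def by blast
  finally have "\<Union>(\<Union>\<SS>) = \<Union>(Pow12_fam mem (\<Union>Wit))" .
  moreover have "\<Union>Wit \<subseteq> otimes \<Sigma> \<Sigma>" "\<Union>\<SS> \<subseteq> \<Sigma>"
    using assms unfolding Wit_def is_otimes_subpartition_def by blast+
  ultimately show ?thesis
    unfolding is_otimes_subpartition_def by (intro conjI exI[where x = "\<Union>Wit"])
qed

lemma Sigma_otimes_eq_Union: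
  "Sigma_otimes mem \<Sigma> = \<Union>{S. is_otimes_subpartition mem \<Sigma> S}"
  unfolding Sigma_otimes_def
  by (rule Greatest_equality) (auto intro: is_otimes_subpartition_Union)

lemma is_otimes_subpartition_Sigma_otimes:
  "is_otimes_subpartition mem \<Sigma> (Sigma_otimes mem \<Sigma>)"
  unfolding Sigma_otimes_eq_Union by (rule is_otimes_subpartition_Union) simp

lemma Pow12_fam_Union_inj:
  assumes "wf_set_model mem" and part: "is_partition \<Sigma>"
    and "\<B>\<^sub>1 \<subseteq> otimes \<Sigma> \<Sigma>" "\<B>\<^sub>2 \<subseteq> otimes \<Sigma> \<Sigma>"
    and "\<Union>(Pow12_fam mem \<B>\<^sub>1) = \<Union>(Pow12_fam mem \<B>\<^sub>2)"
  shows "\<B>\<^sub>1 = \<B>\<^sub>2"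
proof -
  have nonempty: "\<forall>s\<in>\<Sigma>. s \<noteq> {}"
    using part unfolding is_partition_def by (rule conjunct1)
  have "\<B> \<subseteq> \<B>'"
    if sub: "\<B> \<subseteq> otimes \<Sigma> \<Sigma>" "\<B>' \<subseteq> otimes \<Sigma> \<Sigma>"
      and eq: "\<Union>(Pow12_fam mem \<B>) = \<Union>(Pow12_fam mem \<B>')" for \<B> \<B>'
  proof
    fix B assume B: "B \<in> \<B>"
    obtain x where x: "x \<in> Pow12 mem B"
      using Pow12_nonempty[OF assms(1) nonempty subsetD[OF sub(1) B]] by (meson ex_in_conv)
    have "x \<in> \<Union>(Pow12_fam mem \<B>')"
      using eq B x unfolding Pow12_fam_def by blast
    then obtain B' where B': "B' \<in> \<B>'" "x \<in> Pow12 mem B'"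
      unfolding Pow12_fam_def by blast
    have "B = B'"
      using Pow12_eq_on_partition[OF part _ _ x B'(2)] otimes_subset sub B B'(1) by blast
    with B'(1) show "B \<in> \<B>'" by simp
  qed
  with assms(3-5) show ?thesis by (intro subset_antisym) simp_all
qed

lemma Pi_otimes_witness:
  assumes "wf_set_model mem" and "is_partition \<Sigma>"
  shows "Pi_otimes mem \<Sigma> \<subseteq> otimes \<Sigma> \<Sigma>"
    and "\<Union>(Sigma_otimes mem \<Sigma>) = \<Union>(Pow12_fam mem (Pi_otimes mem \<Sigma>))"
proof -
  have "\<exists>!\<B>. \<B> \<subseteq> otimes \<Sigma> \<Sigma> \<and> \<Union>(Sigma_otimes mem \<Sigma>) = \<Union>(Pow12_fam mem \<B>)"
    using is_otimes_subpartition_Sigma_otimes[of mem \<Sigma>]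
      Pow12_fam_Union_inj[OF assms]
    unfolding is_otimes_subpartition_def by metis
  then have "Pi_otimes mem \<Sigma> \<subseteq> otimes \<Sigma> \<Sigma> \<and>
      \<Union>(Sigma_otimes mem \<Sigma>) = \<Union>(Pow12_fam mem (Pi_otimes mem \<Sigma>))"
    unfolding Pi_otimes_def by (rule theI')
  then show "Pi_otimes mem \<Sigma> \<subseteq> otimes \<Sigma> \<Sigma>"
    and "\<Union>(Sigma_otimes mem \<Sigma>) = \<Union>(Pow12_fam mem (Pi_otimes mem \<Sigma>))"
    by simp_all
qed

lemma induced_target_subset: "induced_target mem \<Sigma> P f B \<subseteq> P"
  unfolding induced_target_def by auto

lemma induced_source_place:
  assumes "q \<in> P" and "f q \<notin> Sigma_otimes mem \<Sigma>"
  shows "q \<in> source_places P (induced_target mem \<Sigma> P f)"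
  using assms unfolding source_places_def induced_target_def by simp

lemma mem_Union_Sigma_otimes_node:
  assumes "wf_set_model mem" and "is_partition \<Sigma>" and surj: "f ` P = \<Sigma>"
    and "x \<in> \<Union>(Sigma_otimes mem \<Sigma>)"
  obtains a b where "{a, b} \<in> otimes P P" "f ` {a, b} \<in> Pi_otimes mem \<Sigma>"
    "x \<in> Pow12 mem (f ` {a, b})"
proof -
  note Pi = Pi_otimes_witness[OF assms(1,2)]
  obtain B where B: "B \<in> Pi_otimes mem \<Sigma>" "x \<in> Pow12 mem B"
    using assms(4) unfolding Pi(2) Pow12_fam_def by blast
  then have "B \<in> otimes \<Sigma> \<Sigma>"
    using Pi(1) by blast
  then obtain u v where uv: "B = {u, v}" "u \<in> \<Sigma>" "v \<in> \<Sigma>"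
    unfolding otimes_def by blast
  obtain a b where ab: "a \<in> P" "b \<in> P" "u = f a" "v = f b"
    using uv(2,3) unfolding surj[symmetric] by (elim imageE)
  have "{a, b} \<in> otimes P P"
    using ab(1,2) unfolding otimes_def by blast
  moreover have "f ` {a, b} = B"
    using uv(1) ab(3,4) by simp
  ultimately show ?thesis
    using that B by simp
qed

lemma induced_place_accessible:
  assumes wf: "wf_set_model mem" and part: "is_partition \<Sigma>" and surj: "f ` P = \<Sigma>"
    and "q \<in> P" and "x \<in> f q"
  shows "q \<in> accessible_places P (induced_target mem \<Sigma> P f)"
proof -
  have "wf {(x, y). mem x y}"
    using wf unfolding wf_set_model_def by (rule conjunct1)
  from this assms(4,5) show ?thesis
  proof (induction x arbitrary: q rule: wf_induct_rule)
    case (less x q)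
    let ?T = "induced_target mem \<Sigma> P f"
    show "q \<in> accessible_places P ?T"
    proof (cases "f q \<in> Sigma_otimes mem \<Sigma>")
      case False
      with less.prems(1) have "q \<in> source_places P ?T"
        by (rule induced_source_place)
      then show ?thesis
        by (rule subsetD[OF source_places_subset_accessible])
    next
      case True
      then obtain a b where node: "{a, b} \<in> otimes P P" "f ` {a, b} \<in> Pi_otimes mem \<Sigma>"
        and x: "x \<in> Pow12 mem (f ` {a, b})"
        using mem_Union_Sigma_otimes_node[OF wf part surj] less.prems(2) by blast
      have "{a, b} \<subseteq> accessible_places P ?T"
      proof
        fix c assume c: "c \<in> {a, b}"
        then have "ext mem x \<inter> f c \<noteq> {}"
          using x unfolding Pow12_def by blast
        then obtain y where "mem y x" "y \<in> f c"
          unfolding ext_def by blast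
        moreover have "c \<in> P"
          using otimes_subset[OF node(1)] c ..
        ultimately show "c \<in> accessible_places P ?T"
          using less.IH[of y c] by simp
      qed
      then have "?T {a, b} \<subseteq> accessible_places P ?T"
        by (rule target_subset_accessible[OF node(1)])
      moreover have "f q \<inter> Pow12 mem (f ` {a, b}) \<noteq> {}"
        using less.prems(2) x by blast
      then have "q \<in> ?T {a, b}"
        using node(2) True less.prems(1) unfolding induced_target_def by simp
      ultimately show ?thesis by blast
    qed
  qed
qed

theorem mainTheorem10:
  fixes mem :: "'a \<Rightarrow> 'a \<Rightarrow> bool"
    and \<Sigma> :: "'a set set"
    and P :: "'p set"
    and f :: "'p \<Rightarrow> 'a set"
  assumes "wf_set_model mem"
    and "is_partition \<Sigma>"
    and "bij_betw f P \<Sigma>"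
  shows "accessible_graph P (induced_target mem \<Sigma> P f)"
proof (rule accessible_graphI)
  show "induced_target mem \<Sigma> P f A \<subseteq> P" for A
    by (rule induced_target_subset)
  have surj: "f ` P = \<Sigma>"
    using assms(3) by (rule bij_betw_imp_surj_on)
  show "P \<subseteq> accessible_places P (induced_target mem \<Sigma> P f)"
  proof
    fix q assume q: "q \<in> P"
    have "f q \<noteq> {}"
      using assms(2) q unfolding surj[symmetric] is_partition_def by blast
    then obtain x where "x \<in> f q"
      by blast
    with q show "q \<in> accessible_places P (induced_target mem \<Sigma> P f)"
      by (rule induced_place_accessible[OF assms(1,2) surj])
  qed
qed

end
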